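(* Let $b\ge 3$, $D\subset\{0,\dots,b-1\}$ with $2\le|D|<b-1$, and list $\mathcal C=\mathcal C_{b,D}$ increasingly as $k_0<k_1<\cdots$. Given $\epsilon>0$ and $H\in\mathbb N$, for all sufficiently large $n_0$ there exist a set $G\subset \mathcal C\cap[0,b^{n_0})$ and a map $(k',h)\mapsto k''(k',h)\in\mathcal C\cap[0,b^{n_0})$, defined for $k'\in G$ and $0<h\le H$, such that: (1) $|G|\ge(1-\epsilon)|D|^{n_0}$; (2) for every $k'\in G$, $0<h\le H$ and $m\ge 1$, if $n$ is the index with $k_n=b^{n_0}k_m+k'$, then $k_{n+h}=b^{n_0}k_m+k''(k',h)$ and $s_b(k_{n+h})=s_b(k_m)+s_b(k''(k',h))$.
   Context: For an integer base $b\ge 3$ and a digit set $D$, the classical integer Cantor set is $\mathcal C_{b,D}=\{\sum_{j=0}^{k} d_j b^j : k\in\mathbb N_0,\ d_j\in D\}$. For a nonnegative integer $k=\sum_c k_c b^c$ with $k_c\in\{0,\dots,b-1\}$, $s_b(k)=\sum_c k_c$ is the base-$b$ sum of digits. *)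

theory Defs
  imports Complex_Main "HOL-Library.Infinite_Set"
begin

definition cantor_set :: "nat \<Rightarrow> nat set \<Rightarrow> nat set" where
  "cantor_set b D = {(\<Sum>j\<le>k. d j * b ^ j) | k d. \<forall>j\<le>k. d j \<in> D}"

definition cantor_enum :: "nat \<Rightarrow> nat set \<Rightarrow> nat \<Rightarrow> nat" where
  "cantor_enum b D n = enumerate (cantor_set b D) n"

text \<open>Base-b sum of digits: s_b(k) = sum over c of the c-th base-b digit of k
  (digits of position c > k vanish for b >= 2).\<close>
definition digit_sum :: "nat \<Rightarrow> nat \<Rightarrow> nat" where
  "digit_sum b k = (\<Sum>c\<le>k. (k div b ^ c) mod b)"

end

theory Submission
  imports Defs
begin

(* For a nonzero a in the Cantor set C, the elements of C in the block [b^n0 a, b^n0 (a + 1))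
   are exactly the numbers b^n0 a + y, where y runs through the |D|^n0 numbers below b^n0 whose
   n0 base-b digits, leading zeros included, all lie in D.  List these y increasingly as
   y_0 < y_1 < ...  The enumeration of C passes through the block in this order, so if
   k_n = b^n0 k_m + y_r and r + H < |D|^n0, then k_(n+h) = b^n0 k_m + y_(r+h) for h <= H, and the
   digit sums add because the two summands occupy disjoint digit positions.  Taking G to be all
   y_r but the last H loses only H <= eps |D|^n0 elements once n0 is large. *)

lemma digit_in_cantor_set: "d \<in> D \<Longrightarrow> d \<in> cantor_set b D"
  unfolding cantor_set_def by (rule CollectI, rule exI[of _ 0], rule exI[of _ "\<lambda>_. d"]) simp

lemma cantor_set_digit_add:
  assumes "d \<in> D" "c \<in> cantor_set b D"
  shows "d + b * c \<in> cantor_set b D"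
proof -
  from assms(2) obtain k e where c: "c = (\<Sum>j\<le>k. e j * b ^ j)" and e: "\<forall>j\<le>k. e j \<in> D"
    unfolding cantor_set_def by blast
  define e' where "e' = (\<lambda>j. if j = 0 then d else e (j - 1))"
  have "(\<Sum>j\<le>Suc k. e' j * b ^ j) = d + b * c"
    unfolding sum.atMost_Suc_shift c by (simp add: e'_def sum_distrib_left mult_ac)
  moreover have "\<forall>j\<le>Suc k. e' j \<in> D"
    using e assms(1) by (auto simp: e'_def)
  ultimately show ?thesis
    unfolding cantor_set_def mem_Collect_eq by (intro exI[of _ "Suc k"] exI[of _ e']) simp
qed

lemma cantor_set_mod_div:
  assumes "D \<subseteq> {0..<b}" "c \<in> cantor_set b D"
  shows "c mod b \<in> D \<and> (c div b = 0 \<or> c div b \<in> cantor_set b D)"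
proof -
  from assms(2) obtain k e where c: "c = (\<Sum>j\<le>k. e j * b ^ j)" and e: "\<forall>j\<le>k. e j \<in> D"
    unfolding cantor_set_def by blast
  have e0: "e 0 < b"
    using e assms(1) by auto
  show ?thesis
  proof (cases k)
    case 0
    then show ?thesis using c e e0 by auto
  next
    case (Suc k')
    define r where "r = (\<Sum>j\<le>k'. e (Suc j) * b ^ j)"
    have "c = e 0 + b * r"
      unfolding c Suc sum.atMost_Suc_shift r_def by (simp add: sum_distrib_left mult_ac)
    then have "c mod b = e 0" "c div b = r"
      using e0 by auto
    moreover have "r \<in> cantor_set b D"
      unfolding cantor_set_def r_def using e Suc by fastforce
    ultimately show ?thesis using e by auto
  qed
qed

lemma infinite_cantor_set:
  assumes "d \<in> D" "d \<noteq> 0" "0 < b"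
  shows "infinite (cantor_set b D)"
proof
  assume fin: "finite (cantor_set b D)"
  let ?c = "Max (cantor_set b D)"
  have "?c \<in> cantor_set b D"
    using fin digit_in_cantor_set[OF assms(1)] by (intro Max_in) auto
  then have "d + b * ?c \<in> cantor_set b D"
    by (rule cantor_set_digit_add[OF assms(1)])
  then have "d + b * ?c \<le> ?c"
    using fin by simp
  moreover have "?c \<le> b * ?c"
    using assms(3) by simp
  ultimately show False using assms(2) by simp
qed

fun digit_strings :: "nat \<Rightarrow> nat set \<Rightarrow> nat \<Rightarrow> nat set" where
  "digit_strings b D 0 = {0}"
| "digit_strings b D (Suc n) = (\<lambda>(d, y). d + b * y) ` (D \<times> digit_strings b D n)"

lemma digit_strings_less:
  assumes "D \<subseteq> {0..<b}" "y \<in> digit_strings b D n"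
  shows "y < b ^ n"
  using assms(2)
proof (induction n arbitrary: y)
  case 0
  then show ?case by simp
next
  case (Suc n)
  then obtain d y' where d: "d \<in> D" "y' \<in> digit_strings b D n" "y = d + b * y'"
    by auto
  have "d < b"
    using d(1) assms(1) by auto
  then have "d + b * y' < b * (y' + 1)"
    by simp
  also have "\<dots> \<le> b * b ^ n"
    using Suc.IH[OF d(2)] by (intro mult_le_mono2) simp
  finally show ?case using d(3) by simp
qed

lemma finite_card_digit_strings:
  assumes "D \<subseteq> {0..<b}"
  shows "finite (digit_strings b D n) \<and> card (digit_strings b D n) = card D ^ n"
proof (induction n)
  case 0
  then show ?case by simp
next
  case (Suc n)
  have "finite D"
    using assms finite_subset by blast
  have "inj_on (\<lambda>(d, y). d + b * y) (D \<times> digit_strings b D n)"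
  proof (rule inj_onI, clarsimp)
    fix d y d' y'
    assume "d \<in> D" "d' \<in> D" and eq: "d + b * y = d' + b * y'"
    then have "d < b" "d' < b"
      using assms by auto
    then show "d = d' \<and> y = y'"
      using arg_cong[OF eq, of "\<lambda>x. x mod b"] arg_cong[OF eq, of "\<lambda>x. x div b"] by simp
  qed
  then show ?case
    using Suc \<open>finite D\<close> by (simp add: card_image card_cartesian_product)
qed

lemma digit_strings_subset_cantor_set:
  "n \<ge> 1 \<Longrightarrow> digit_strings b D n \<subseteq> cantor_set b D"
proof (induction n)
  case 0
  then show ?case by simp
next
  case (Suc n)
  show ?case
  proof (cases n)
    case 0
    then show ?thesis by (auto intro: digit_in_cantor_set)
  next
    case (Suc m)
    then show ?thesis using Suc.IH by (auto intro: cantor_set_digit_add)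
  qed
qed

lemma shift_add_digit_string_in_cantor_set:
  assumes "a \<in> cantor_set b D" "y \<in> digit_strings b D n"
  shows "b ^ n * a + y \<in> cantor_set b D"
  using assms(2)
proof (induction n arbitrary: y)
  case 0
  then show ?case using assms(1) by simp
next
  case (Suc n)
  then obtain d y' where d: "d \<in> D" "y' \<in> digit_strings b D n" "y = d + b * y'"
    by auto
  have "b ^ Suc n * a + y = d + b * (b ^ n * a + y')"
    using d(3) by (simp add: algebra_simps)
  then show ?case
    using cantor_set_digit_add[OF d(1) Suc.IH[OF d(2)]] by simp
qed

(* A nonzero quotient c div b^n means that the representation of c has more than n digits,
   so the lowest n of them all come from D. *)
lemma cantor_set_mod_power_in_digit_strings:
  assumes "D \<subseteq> {0..<b}" "c \<in> cantor_set b D" "c div b ^ n \<noteq> 0"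
  shows "c mod b ^ n \<in> digit_strings b D n"
  using assms(2,3)
proof (induction n arbitrary: c)
  case 0
  then show ?case by simp
next
  case (Suc n)
  have q: "c div b ^ Suc n = (c div b) div b ^ n"
    by (simp add: div_mult2_eq)
  then have "c div b \<noteq> 0"
    using Suc.prems(2) by (metis div_0)
  then have "c div b \<in> cantor_set b D" "c mod b \<in> D"
    using cantor_set_mod_div[OF assms(1) Suc.prems(1)] by auto
  then have "(c div b) mod b ^ n \<in> digit_strings b D n"
    using Suc.IH Suc.prems(2) q by simp
  moreover have "c mod b ^ Suc n = c mod b + b * ((c div b) mod b ^ n)"
    by (simp add: mod_mult2_eq)
  ultimately show ?case
    using \<open>c mod b \<in> D\<close> by auto
qed

lemma cantor_set_Int_block:
  assumes "D \<subseteq> {0..<b}" "0 < b" "a \<in> cantor_set b D" "a \<noteq> 0"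
  shows "cantor_set b D \<inter> {b ^ n * a..<b ^ n * a + b ^ n}
           = (\<lambda>y. b ^ n * a + y) ` digit_strings b D n"
proof (intro equalityI subsetI)
  fix c
  assume c: "c \<in> cantor_set b D \<inter> {b ^ n * a..<b ^ n * a + b ^ n}"
  then have "c div b ^ n = a"
    using assms(2) by (intro div_nat_eqI) (auto simp: mult.commute)
  then have "c mod b ^ n \<in> digit_strings b D n" "c = b ^ n * a + c mod b ^ n"
    using cantor_set_mod_power_in_digit_strings[OF assms(1)] c assms(4)
    by (auto simp: mult.commute)
  then show "c \<in> (\<lambda>y. b ^ n * a + y) ` digit_strings b D n"
    by (metis image_eqI)
next
  fix c
  assume "c \<in> (\<lambda>y. b ^ n * a + y) ` digit_strings b D n"
  then show "c \<in> cantor_set b D \<inter> {b ^ n * a..<b ^ n * a + b ^ n}"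
    using shift_add_digit_string_in_cantor_set[OF assms(3)] digit_strings_less[OF assms(1)]
    by auto
qed

lemma enumerate_add_within_segment:
  fixes A :: "'a::wellorder set"
  assumes A: "infinite A" and xs: "sorted_wrt (<) xs" and seg: "A \<inter> {lo..<hi} = set xs"
    and r: "enumerate A n = xs ! r"
  shows "r + h < length xs \<Longrightarrow> enumerate A (n + h) = xs ! (r + h)"
proof (induction h)
  case 0
  then show ?case using r by simp
next
  case (Suc h)
  define i where "i = r + h"
  have i: "Suc i < length xs"
    using Suc.prems i_def by simp
  have in_seg: "xs ! j \<in> A \<and> lo \<le> xs ! j \<and> xs ! j < hi" if "j < length xs" for j
    using nth_mem[OF that] seg by auto
  have mono: "xs ! j \<le> xs ! k" if "j \<le> k" "k < length xs" for j k
    using sorted_nth_mono[OF strict_sorted_imp_sorted[OF xs] that] .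
  have "(LEAST s. s \<in> A \<and> xs ! i < s) = xs ! Suc i"
  proof (rule Least_equality)
    show "xs ! Suc i \<in> A \<and> xs ! i < xs ! Suc i"
      using in_seg[OF i] sorted_wrt_nth_less[OF xs _ i, of i] by simp
  next
    fix c
    assume c: "c \<in> A \<and> xs ! i < c"
    show "xs ! Suc i \<le> c"
    proof (cases "c < hi")
      case False
      then have "xs ! Suc i < c"
        using in_seg[OF i] by (blast intro: order.strict_trans2 leI)
      then show ?thesis by (rule less_imp_le)
    next
      case True
      have "lo < c"
        using order_le_less_trans[of lo "xs ! i" c] in_seg[of i] i c by simp
      then have "c \<in> set xs"
        unfolding seg[symmetric] using c True by simp
      then obtain j where j: "j < length xs" "c = xs ! j"
        by (auto simp: in_set_conv_nth)
      have "i < j"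
      proof (rule ccontr)
        assume "\<not> i < j"
        then have "xs ! j \<le> xs ! i"
          using mono i by simp
        then show False using c j by (simp add: leD)
      qed
      then show ?thesis
        using j mono by simp
    qed
  qed
  then show ?case
    using enumerate_Suc''[OF A, of "n + h"] Suc.IH i i_def by simp
qed

lemma cantor_enum_within_block:
  assumes D: "D \<subseteq> {0..<b}" and b: "0 < b" and inf: "infinite (cantor_set b D)"
    and m: "1 \<le> m" and L: "L = sorted_list_of_set (digit_strings b D n0)"
    and n: "cantor_enum b D n = b ^ n0 * cantor_enum b D m + L ! r"
    and rh: "r + h < length L"
  shows "cantor_enum b D (n + h) = b ^ n0 * cantor_enum b D m + L ! (r + h)"
proof -
  define a where "a = cantor_enum b D m"
  have a: "a \<in> cantor_set b D"
    unfolding a_def cantor_enum_def by (rule enumerate_in_set[OF inf])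
  have "enumerate (cantor_set b D) 0 < enumerate (cantor_set b D) m"
    using m inf by (intro enumerate_mono) auto
  then have "a \<noteq> 0"
    unfolding a_def cantor_enum_def by simp
  define xs where "xs = map (\<lambda>y. b ^ n0 * a + y) L"
  have "finite (digit_strings b D n0)"
    using finite_card_digit_strings[OF D] by blast
  then have seg: "cantor_set b D \<inter> {b ^ n0 * a..<b ^ n0 * a + b ^ n0} = set xs"
    using cantor_set_Int_block[OF D b a \<open>a \<noteq> 0\<close>] by (simp add: xs_def L)
  have sorted: "sorted_wrt (<) xs"
    unfolding xs_def L sorted_wrt_map by simp
  have "enumerate (cantor_set b D) n = xs ! r" "r + h < length xs"
    using n rh unfolding cantor_enum_def xs_def a_def by simp_all
  then have "enumerate (cantor_set b D) (n + h) = xs ! (r + h)"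
    by (rule enumerate_add_within_segment[OF inf sorted seg])
  then show ?thesis
    using rh unfolding cantor_enum_def xs_def a_def by simp
qed

lemma less_power_self: "b \<ge> 2 \<Longrightarrow> n < b ^ n"
  using less_le_trans[OF less_exp power_mono[of 2 b n]] by simp

lemma digit_sum_eq_sum_lessThan:
  assumes "b \<ge> 2" "k < b ^ N"
  shows "digit_sum b k = (\<Sum>c<N. (k div b ^ c) mod b)"
proof -
  have vanish: "(k div b ^ c) mod b = 0" if "N \<le> c \<or> k < c" for c
  proof -
    have "k < b ^ c"
    proof (cases "N \<le> c")
      case True
      then have "b ^ N \<le> b ^ c"
        using assms(1) by (intro power_increasing) auto
      then show ?thesis using assms(2) by simp
    next
      case False
      then show ?thesis
        using that less_power_self[OF assms(1), of c] by simp
    qed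
    then show ?thesis by simp
  qed
  have "digit_sum b k = (\<Sum>c<max N (Suc k). (k div b ^ c) mod b)"
    unfolding digit_sum_def lessThan_Suc_atMost[symmetric]
    by (rule sum.mono_neutral_left) (use vanish in auto)
  also have "\<dots> = (\<Sum>c<N. (k div b ^ c) mod b)"
    by (rule sum.mono_neutral_right) (use vanish in auto)
  finally show ?thesis .
qed

lemma digit_sum_mod_div:
  assumes "b \<ge> 2"
  shows "digit_sum b k = k mod b + digit_sum b (k div b)"
proof -
  have k: "k < b ^ k"
    by (rule less_power_self[OF assms])
  also have "\<dots> \<le> b ^ k * b"
    using assms by simp
  finally have "k div b < b ^ k"
    using assms by (simp add: div_less_iff_less_mult)
  then have "digit_sum b (k div b) = (\<Sum>c<k. (k div b div b ^ c) mod b)"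
    using digit_sum_eq_sum_lessThan[OF assms] by blast
  moreover have "digit_sum b k = (\<Sum>c<Suc k. (k div b ^ c) mod b)"
    using digit_sum_eq_sum_lessThan[OF assms] k assms by simp
  ultimately show ?thesis
    unfolding sum.lessThan_Suc_shift by (simp add: div_mult2_eq)
qed

lemma digit_sum_shift_add:
  assumes "b \<ge> 2"
  shows "y < b ^ n \<Longrightarrow> digit_sum b (b ^ n * a + y) = digit_sum b a + digit_sum b y"
proof (induction n arbitrary: y)
  case 0
  then show ?case by (simp add: digit_sum_def)
next
  case (Suc n)
  have "(b ^ Suc n * a + y) mod b = y mod b"
    by (simp add: mult.assoc)
  moreover have "(b ^ Suc n * a + y) div b = b ^ n * a + y div b"
    using assms by (simp add: mult.assoc)
  ultimately have "digit_sum b (b ^ Suc n * a + y) = y mod b + digit_sum b (b ^ n * a + y div b)"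
    using digit_sum_mod_div[OF assms, of "b ^ Suc n * a + y"] by simp
  also have "\<dots> = y mod b + (digit_sum b a + digit_sum b (y div b))"
    using Suc.prems assms by (subst Suc.IH) (simp_all add: div_less_iff_less_mult mult.commute)
  also have "\<dots> = digit_sum b a + digit_sum b y"
    using digit_sum_mod_div[OF assms, of y] by simp
  finally show ?case .
qed

lemma cantor_enum_block_successors:
  fixes b :: nat and D :: "nat set" and H n0 :: nat
  assumes b: "b \<ge> 2" and D: "D \<subseteq> {0..<b}" and inf: "infinite (cantor_set b D)"
    and n0: "n0 \<ge> 1"
  obtains G kk where "G \<subseteq> cantor_set b D \<inter> {0..<b ^ n0}"
    and "\<And>k' h. k' \<in> G \<Longrightarrow> h \<le> H \<Longrightarrow> kk k' h \<in> cantor_set b D \<inter> {0..<b ^ n0}"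
    and "card D ^ n0 \<le> card G + H"
    and "\<And>k' h m n. k' \<in> G \<Longrightarrow> h \<le> H \<Longrightarrow> 1 \<le> m \<Longrightarrow>
           cantor_enum b D n = b ^ n0 * cantor_enum b D m + k' \<Longrightarrow>
           cantor_enum b D (n + h) = b ^ n0 * cantor_enum b D m + kk k' h
           \<and> digit_sum b (cantor_enum b D (n + h))
               = digit_sum b (cantor_enum b D m) + digit_sum b (kk k' h)"
proof -
  define L where "L = sorted_list_of_set (digit_strings b D n0)"
  have "finite (digit_strings b D n0)" "card (digit_strings b D n0) = card D ^ n0"
    using finite_card_digit_strings[OF D] by auto
  then have set_L: "set L = digit_strings b D n0" and "distinct L"
    and len_L: "length L = card D ^ n0"
    unfolding L_def by auto
  define G where "G = (\<lambda>r. L ! r) ` {..<length L - H}"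
  define kk where "kk = (\<lambda>k' h. L ! (the_inv_into {..<length L} ((!) L) k' + h))"
  have L_mem: "L ! j \<in> cantor_set b D \<inter> {0..<b ^ n0}" if "j < length L" for j
    using nth_mem[OF that] digit_strings_subset_cantor_set[OF n0] digit_strings_less[OF D]
    unfolding set_L by auto
  have kk_nth: "kk (L ! r) h = L ! (r + h)" if "r < length L" for r h
    unfolding kk_def using that \<open>distinct L\<close> by (subst the_inv_into_f_f) (auto intro: inj_on_nth)
  have G_sub: "G \<subseteq> cantor_set b D \<inter> {0..<b ^ n0}"
    unfolding G_def using L_mem by auto
  have kk_mem: "kk k' h \<in> cantor_set b D \<inter> {0..<b ^ n0}" if "k' \<in> G" "h \<le> H" for k' h
    using that L_mem kk_nth unfolding G_def by auto
  have "card G = length L - H"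
    unfolding G_def using \<open>distinct L\<close> by (subst card_image) (auto intro: inj_on_nth)
  then have card_G: "card D ^ n0 \<le> card G + H"
    using len_L by simp
  have block: "cantor_enum b D (n + h) = b ^ n0 * cantor_enum b D m + kk k' h
      \<and> digit_sum b (cantor_enum b D (n + h))
          = digit_sum b (cantor_enum b D m) + digit_sum b (kk k' h)"
    if "k' \<in> G" "h \<le> H" "1 \<le> m" and n: "cantor_enum b D n = b ^ n0 * cantor_enum b D m + k'"
    for k' h m n
  proof -
    obtain r where "r < length L - H" "k' = L ! r"
      using \<open>k' \<in> G\<close> unfolding G_def by blast
    then have r: "r + h < length L" "k' = L ! r"
      using \<open>h \<le> H\<close> by auto
    have "cantor_enum b D (n + h) = b ^ n0 * cantor_enum b D m + kk k' h"
      using cantor_enum_within_block[OF D _ inf \<open>1 \<le> m\<close> L_def] b n r kk_nth by simp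
    moreover have "kk k' h < b ^ n0"
      using kk_mem[OF that(1,2)] by simp
    ultimately show ?thesis
      using digit_sum_shift_add[OF b] by simp
  qed
  show thesis
    by (rule that[OF G_sub kk_mem card_G block])
qed

lemma eventually_le_mult_power:
  fixes q \<epsilon> x :: real
  assumes "1 < q" "0 < \<epsilon>"
  obtains N where "\<And>n. N \<le> n \<Longrightarrow> x \<le> \<epsilon> * q ^ n"
proof -
  have "\<forall>\<^sub>F n in sequentially. x / \<epsilon> < q ^ n"
    using assms(1) by (rule Archimedean_eventually_pow)
  then obtain N where "\<And>n. N \<le> n \<Longrightarrow> x / \<epsilon> < q ^ n"
    unfolding eventually_sequentially by blast
  then have "\<And>n. N \<le> n \<Longrightarrow> x \<le> \<epsilon> * q ^ n"
    using assms(2) by (simp add: pos_divide_less_eq less_imp_le mult.commute)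
  then show thesis
    by (rule that)
qed

theorem mainTheorem2:
  fixes b :: nat and D :: "nat set" and \<epsilon> :: real and H :: nat
  assumes "b \<ge> 3" and "D \<subseteq> {0..<b}" and "2 \<le> card D" and "card D < b - 1"
    and "\<epsilon> > 0"
  shows "\<exists>N. \<forall>n0\<ge>N. \<exists>G kk.
           G \<subseteq> cantor_set b D \<inter> {0..<b ^ n0}
         \<and> (\<forall>k'\<in>G. \<forall>h. 0 < h \<and> h \<le> H \<longrightarrow> kk k' h \<in> cantor_set b D \<inter> {0..<b ^ n0})
         \<and> real (card G) \<ge> (1 - \<epsilon>) * real (card D) ^ n0
         \<and> (\<forall>k'\<in>G. \<forall>h. 0 < h \<and> h \<le> H \<longrightarrow> (\<forall>m\<ge>1. \<forall>n.
               cantor_enum b D n = b ^ n0 * cantor_enum b D m + k' \<longrightarrow>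
                 cantor_enum b D (n + h) = b ^ n0 * cantor_enum b D m + kk k' h
               \<and> digit_sum b (cantor_enum b D (n + h))
                   = digit_sum b (cantor_enum b D m) + digit_sum b (kk k' h)))"
proof -
  have b: "b \<ge> 2"
    using assms(1) by simp
  obtain d where "d \<in> D" "d \<noteq> 0"
    using assms(3) card_mono[of "{0}" D] by fastforce
  then have inf: "infinite (cantor_set b D)"
    using infinite_cantor_set b by simp
  obtain N where N: "\<And>n. N \<le> n \<Longrightarrow> real H \<le> \<epsilon> * real (card D) ^ n"
    using eventually_le_mult_power[of "real (card D)" \<epsilon>] assms(3,5) by auto
  show ?thesis
  proof (intro exI[of _ "max N 1"] allI impI, goal_cases)
    case (1 n0)
    then have "1 \<le> n0"
      by simp
    show ?case
    proof (rule cantor_enum_block_successors[OF b assms(2) inf \<open>1 \<le> n0\<close>, of H], goal_cases)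
      case (1 G kk)
      have "real (card D ^ n0) \<le> real (card G + H)"
        using 1(3) by (rule of_nat_mono)
      then have "(1 - \<epsilon>) * real (card D) ^ n0 \<le> real (card G)"
        using N[of n0] \<open>max N 1 \<le> n0\<close> by (simp add: algebra_simps)
      with 1 show ?case
        by (intro exI[of _ G] exI[of _ kk] conjI ballI allI impI) blast+
    qed
  qed
qed

end
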